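(* Define $\mathrm{TS}:Q\to\mathbb{R}$ by $\mathrm{TS}(q)=\int_{p(q)/q}^{1}(vq-c)f(v)\,dv$. Then $\mathrm{TS}$ is convex on $Q$ if and only if \[ r(v)r''(v)+r'(v)\le 1+(1-r'(v))^2 \quad\text{for all } v\in\big(\overline p(q_h),\overline p(q_\ell)\big). \]
   Context: Let $0<q_\ell<q_h<\infty$, $Q=[q_\ell,q_h]$, and let $c$ be a real number with $0<c<q_\ell$. Let $F$ be a probability distribution on $[0,1]$ with support $[0,1]$ admitting a twice continuously differentiable density $f:(0,1)\to\mathbb{R}_{>0}$. Define $r(v)=(1-F(v))/f(v)$ and $\psi(v)=v-r(v)$ on $(0,1)$, and assume $\psi'(v)>0$ whenever $\psi(v)>0$. For $q\in Q$, $p(q)$ is the unique maximizer over $p\in\mathbb{R}$ of $(p-c)\big(1-F(p/q)\big)$, and $\overline p(q)=p(q)/q$. *)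

theory Defs
  imports "HOL-Analysis.Analysis"
begin

definition inv_hazard :: "(real \<Rightarrow> real) \<Rightarrow> (real \<Rightarrow> real) \<Rightarrow> real \<Rightarrow> real" where
  "inv_hazard F f v = (1 - F v) / f v"

definition virt_val :: "(real \<Rightarrow> real) \<Rightarrow> (real \<Rightarrow> real) \<Rightarrow> real \<Rightarrow> real" where
  "virt_val F f v = v - inv_hazard F f v"

definition opt_price :: "(real \<Rightarrow> real) \<Rightarrow> real \<Rightarrow> real \<Rightarrow> real" where
  "opt_price F c q = (THE p. \<forall>p'::real. (p' - c) * (1 - F (p' / q)) \<le> (p - c) * (1 - F (p / q)))"

definition opt_price_bar :: "(real \<Rightarrow> real) \<Rightarrow> real \<Rightarrow> real \<Rightarrow> real" where
  "opt_price_bar F c q = opt_price F c q / q"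

definition total_surplus :: "(real \<Rightarrow> real) \<Rightarrow> (real \<Rightarrow> real) \<Rightarrow> real \<Rightarrow> real \<Rightarrow> real" where
  "total_surplus F f c q = integral {opt_price_bar F c q..1} (\<lambda>v. (v * q - c) * f v)"

end

theory Submission
  imports Defs
begin

(* The monopolist's first-order condition reads psi(w) = c/q for the cutoff w = p(q)/q, so w
   decreases in q. Differentiating TS(q) = int_w^1 (v q - c) f(v) dv, with dw/dq taken from
   psi(w) = c/q, gives TS'(q) = marginal_surplus w, where
     marginal_surplus v = v (1 - F v) + int_v^1 (1 - F) + (1 - F v) psi(v) / (1 - r'(v)).
   Hence TS is convex iff marginal_surplus is nonincreasing between the cutoffs of q_h and q_l.
   Its derivative is  - f psi / (1 - r')^2 * (1 + (1 - r')^2 - (r r'' + r')),  and psi > 0 there,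
   so it is nonpositive exactly when the condition holds. *)

lemma DERIV_pos_where_pos_imp_less:
  fixes g g' :: "real \<Rightarrow> real"
  assumes "a < b" and "g a > 0"
    and deriv: "\<And>x. x \<in> {a..b} \<Longrightarrow> (g has_real_derivative g' x) (at x)"
    and pos: "\<And>x. x \<in> {a..b} \<Longrightarrow> g x > 0 \<Longrightarrow> g' x > 0"
  shows "g a < g b"
  \<comment> \<open>g exceeds g a just right of a, so a maximum of g on [a,b] sits at an interior point
     where g > 0, hence g' > 0 there\<close>
proof (rule ccontr)
  assume not_less: "\<not> g a < g b"
  obtain d where "d > 0" and right: "\<And>h. h > 0 \<Longrightarrow> h < d \<Longrightarrow> g a < g (a + h)"
    using DERIV_pos_inc_right[OF deriv[of a] pos[of a]] assms by auto
  define x where "x = a + min d (b - a) / 2"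
  have x: "x \<in> {a<..<b}" "g a < g x"
    using right[of "min d (b - a) / 2"] \<open>d > 0\<close> \<open>a < b\<close> by (auto simp: x_def min_def field_simps)
  have "continuous_on {a..b} g"
    using deriv by (meson DERIV_isCont continuous_at_imp_continuous_on)
  then obtain u where u: "u \<in> {a..b}" "\<And>y. y \<in> {a..b} \<Longrightarrow> g y \<le> g u"
    using continuous_attains_sup[OF compact_Icc] \<open>a < b\<close> by (metis atLeastAtMost_iff empty_iff less_eq_real_def)
  have "g x \<le> g u"
    using u x by auto
  then have u_inner: "u \<in> {a<..<b}"
    using u(1) x not_less by (cases "u = a \<or> u = b") auto
  have "g' u = 0"
  proof (rule DERIV_local_max[OF deriv])
    show "0 < min (u - a) (b - u)"
      using u_inner by auto
    show "\<forall>y. \<bar>u - y\<bar> < min (u - a) (b - u) \<longrightarrow> g y \<le> g u"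
      using u(2) by (auto simp: abs_if)
  qed (use u in auto)
  moreover have "g' u > 0"
    using pos u(1) \<open>g x \<le> g u\<close> x assms(2) by fastforce
  ultimately show False
    by simp
qed

lemma convex_on_imp_deriv_mono:
  fixes f :: "real \<Rightarrow> real"
  assumes convex: "convex_on A f" and "connected A"
    and x: "x \<in> interior A" and y: "y \<in> interior A" and "x \<le> y"
    and fx: "(f has_real_derivative f'x) (at x)" and fy: "(f has_real_derivative f'y) (at y)"
  shows "f'x \<le> f'y"
proof (cases "x = y")
  case True
  then show ?thesis
    using DERIV_unique[OF fx] fy by simp
next
  case False
  have "f'x * (y - x) \<le> f y - f x"
    using convex_on_imp_above_tangent[OF convex \<open>connected A\<close> x] y interior_subset
      has_field_derivative_at_within[OF fx] by blast
  moreover have "f'y * (x - y) \<le> f x - f y"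
    using convex_on_imp_above_tangent[OF convex \<open>connected A\<close> y] x interior_subset
      has_field_derivative_at_within[OF fy] by blast
  ultimately have "(f'x - f'y) * (y - x) \<le> 0"
    by (simp add: algebra_simps)
  then show ?thesis
    using False \<open>x \<le> y\<close> by (simp add: mult_le_0_iff)
qed

lemma convex_on_Icc_iff_deriv_comp_antitone:
  fixes T K K' g :: "real \<Rightarrow> real"
  assumes g_antitone: "\<And>x y. x \<in> {a..b} \<Longrightarrow> y \<in> {a..b} \<Longrightarrow> x \<le> y \<Longrightarrow> g y \<le> g x"
    and g_onto: "\<And>v. v \<in> {g b<..<g a} \<Longrightarrow> \<exists>x\<in>{a<..<b}. g x = v"
    and T_deriv: "\<And>x. x \<in> {a..b} \<Longrightarrow> (T has_real_derivative K (g x)) (at x)"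
    and K_deriv: "\<And>v. v \<in> {g b..g a} \<Longrightarrow> (K has_real_derivative K' v) (at v)"
  shows "convex_on {a..b} T \<longleftrightarrow> (\<forall>v\<in>{g b<..<g a}. K' v \<le> 0)"
proof
  assume convex: "convex_on {a..b} T"
  have mono: "mono_on {g b<..<g a} (\<lambda>v. - K v)"
  proof (rule mono_onI)
    fix v w assume "v \<in> {g b<..<g a}" "w \<in> {g b<..<g a}" "v \<le> w"
    then obtain x y where x: "x \<in> {a<..<b}" "g x = v" and y: "y \<in> {a<..<b}" "g y = w"
      using g_onto by meson
    show "- K v \<le> - K w"
    proof (cases "y \<le> x")
      case True
      then show ?thesis
        using convex_on_imp_deriv_mono[OF convex connected_Icc _ _ True T_deriv T_deriv] x y by auto
    next
      case False
      then show ?thesis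
        using g_antitone[of x y] x y \<open>v \<le> w\<close> by auto
    qed
  qed
  show "\<forall>v\<in>{g b<..<g a}. K' v \<le> 0"
  proof
    fix v assume v: "v \<in> {g b<..<g a}"
    then have "((\<lambda>v. - K v) has_real_derivative - K' v) (at v)"
      using K_deriv[of v] by (auto intro: DERIV_minus)
    then have "0 \<le> - K' v"
      by (rule mono_on_imp_deriv_nonneg[OF mono]) (use v in simp)
    then show "K' v \<le> 0"
      by simp
  qed
next
  assume K'_nonpos: "\<forall>v\<in>{g b<..<g a}. K' v \<le> 0"
  have K_antitone: "K w \<le> K v" if "v \<in> {g b..g a}" "w \<in> {g b..g a}" "v \<le> w" for v w
  proof (rule DERIV_nonpos_imp_decreasing_open[OF \<open>v \<le> w\<close>])
    show "continuous_on {v..w} K"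
      using that K_deriv by (meson DERIV_isCont atLeastAtMost_iff continuous_at_imp_continuous_on order_trans)
  next
    fix x assume "v < x" "x < w"
    then show "\<exists>y. (K has_real_derivative y) (at x) \<and> y \<le> 0"
      using that K_deriv[of x] K'_nonpos by (meson atLeastAtMost_iff greaterThanLessThan_iff
          less_eq_real_def order_le_less_trans order_less_le_trans)
  qed
  have g_range: "g x \<in> {g b..g a}" if "x \<in> {a..b}" for x
    using g_antitone that by auto
  show "convex_on {a..b} T"
    by (rule convex_on_realI[where f' = "\<lambda>x. K (g x)"])
      (auto intro!: T_deriv K_antitone g_antitone g_range)
qed

locale pricing_model =
  fixes F f f' f'' :: "real \<Rightarrow> real" and c :: real
  assumes c_pos: "0 < c"
    and F_cont: "continuous_on UNIV F"
    and F_below: "\<And>v. v \<le> 0 \<Longrightarrow> F v = 0"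
    and F_above: "\<And>v. 1 \<le> v \<Longrightarrow> F v = 1"
    and F_deriv: "\<And>v. v \<in> {0<..<1} \<Longrightarrow> (F has_real_derivative f v) (at v)"
    and f_pos: "\<And>v. v \<in> {0<..<1} \<Longrightarrow> f v > 0"
    and f_deriv: "\<And>v. v \<in> {0<..<1} \<Longrightarrow> (f has_real_derivative f' v) (at v)"
    and f'_deriv: "\<And>v. v \<in> {0<..<1} \<Longrightarrow> (f' has_real_derivative f'' v) (at v)"
    and psi_mono: "\<And>v. v \<in> {0<..<1} \<Longrightarrow> virt_val F f v > 0 \<Longrightarrow> deriv (virt_val F f) v > 0"
begin

abbreviation "r \<equiv> inv_hazard F f"
abbreviation "r' \<equiv> deriv r"
abbreviation "r'' \<equiv> deriv r'"
abbreviation "psi \<equiv> virt_val F f"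
abbreviation "pbar \<equiv> opt_price_bar F c"

definition surv :: "real \<Rightarrow> real" where
  "surv v = 1 - F v"

lemma F_less_1:
  assumes "v < 1"
  shows "F v < 1"
proof (cases "v \<le> 0")
  case True
  then show ?thesis
    using F_below by simp
next
  case False
  have "F v < F 1"
  proof (rule DERIV_pos_imp_increasing_open[of v 1 F])
    show "continuous_on {v..1} F"
      using F_cont continuous_on_subset by blast
  next
    fix x assume "v < x" "x < 1"
    then show "\<exists>y. (F has_real_derivative y) (at x) \<and> 0 < y"
      using False F_deriv[of x] f_pos[of x] by auto
  qed (use assms in simp)
  then show ?thesis
    using F_above by simp
qed

lemma F_le_1: "F v \<le> 1"
  using F_less_1[of v] F_above[of v] by force

lemma surv_pos: "v < 1 \<Longrightarrow> surv v > 0"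
  using F_less_1 by (simp add: surv_def)

lemma surv_eq: "v \<in> {0<..<1} \<Longrightarrow> surv v = f v * r v"
  using f_pos[of v] by (simp add: surv_def inv_hazard_def)

lemma surv_cont: "continuous_on S surv"
  unfolding surv_def[abs_def] by (intro continuous_intros continuous_on_subset[OF F_cont]) auto

lemma surv_deriv: "v \<in> {0<..<1} \<Longrightarrow> (surv has_real_derivative - f v) (at v)"
  unfolding surv_def[abs_def] by (auto intro!: derivative_eq_intros F_deriv)

lemma r_pos: "v \<in> {0<..<1} \<Longrightarrow> r v > 0"
  using surv_pos f_pos by (simp add: surv_def inv_hazard_def)

lemma r_has_deriv:
  assumes v: "v \<in> {0<..<1}"
  shows "(r has_real_derivative -1 - r v * f' v / f v) (at v)"
proof -
  have "((\<lambda>v. (1 - F v) / f v) has_real_derivative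
      ((- f v) * f v - (1 - F v) * f' v) / (f v * f v)) (at v)"
    using v f_pos[OF v] by (auto intro!: derivative_eq_intros F_deriv f_deriv simp: power2_eq_square)
  moreover have "((- f v) * f v - (1 - F v) * f' v) / (f v * f v) = -1 - r v * f' v / f v"
    using f_pos[OF v] by (simp add: inv_hazard_def field_simps)
  ultimately show ?thesis
    by (simp add: inv_hazard_def[abs_def])
qed

lemma r'_eq: "v \<in> {0<..<1} \<Longrightarrow> r' v = -1 - r v * f' v / f v"
  using r_has_deriv DERIV_imp_deriv by blast

lemma r_deriv: "v \<in> {0<..<1} \<Longrightarrow> (r has_real_derivative r' v) (at v)"
  using r_has_deriv r'_eq by simp

lemma r'_deriv:
  assumes v: "v \<in> {0<..<1}"
  shows "(r' has_real_derivative r'' v) (at v)"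
proof -
  have "((\<lambda>v. -1 - r v * f' v / f v) has_real_derivative
      - (((r' v * f' v + f'' v * r v) * f v - r v * f' v * f' v) / (f v * f v))) (at v)"
    using v f_pos[OF v]
    by (auto intro!: derivative_eq_intros r_deriv f_deriv f'_deriv simp: power2_eq_square)
  then have "(r' has_real_derivative
      - (((r' v * f' v + f'' v * r v) * f v - r v * f' v * f' v) / (f v * f v))) (at v)"
    by (rule has_field_derivative_transform_within_open[where S = "{0<..<1}"]) (use v r'_eq in auto)
  then show ?thesis
    using DERIV_imp_deriv by metis
qed

lemma psi_eq: "psi v = v - r v"
  by (simp add: virt_val_def)

lemma psi_deriv: "v \<in> {0<..<1} \<Longrightarrow> (psi has_real_derivative 1 - r' v) (at v)"
  unfolding virt_val_def[abs_def] by (auto intro!: derivative_eq_intros r_deriv)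

lemma psi_deriv_pos:
  assumes "v \<in> {0<..<1}" "psi v > 0"
  shows "1 - r' v > 0"
  using psi_mono[OF assms] DERIV_imp_deriv[OF psi_deriv[OF assms(1)]] by simp

lemma psi_less_1: "v \<in> {0<..<1} \<Longrightarrow> psi v < 1"
  using r_pos[of v] by (simp add: psi_eq)

lemma psi_less:
  assumes "v \<in> {0<..<1}" "w \<in> {0<..<1}" "v < w" "psi v > 0"
  shows "psi v < psi w"
proof (rule DERIV_pos_where_pos_imp_less[of v w psi "\<lambda>x. 1 - r' x"])
  fix x assume "x \<in> {v..w}"
  then have x: "x \<in> {0<..<1}"
    using assms by auto
  show "(psi has_real_derivative 1 - r' x) (at x)"
    using psi_deriv[OF x] .
  show "psi x > 0 \<Longrightarrow> 1 - r' x > 0"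
    by (rule psi_deriv_pos[OF x])
qed (use assms in auto)

lemma psi_inj:
  assumes "v \<in> {0<..<1}" "w \<in> {0<..<1}" "psi v = psi w" "psi v > 0"
  shows "v = w"
proof (cases v w rule: linorder_cases)
  case less
  then show ?thesis
    using psi_less[of v w] assms by simp
next
  case greater
  then show ?thesis
    using psi_less[of w v] assms by simp
qed

definition revenue :: "real \<Rightarrow> real \<Rightarrow> real" where
  "revenue q p = (p - c) * (1 - F (p / q))"

lemma revenue_nonpos:
  assumes "q > 0" "p \<notin> {c<..<q}"
  shows "revenue q p \<le> 0"
proof (cases "p \<le> c")
  case True
  then show ?thesis
    using F_le_1[of "p / q"] by (simp add: revenue_def mult_nonpos_nonneg)
next
  case False
  then have "1 \<le> p / q"
    using assms by simp
  then show ?thesis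
    by (simp add: revenue_def F_above)
qed

lemma revenue_maximizer_exists:
  assumes "c < q"
  shows "\<exists>p. \<forall>p'. revenue q p' \<le> revenue q p"
proof -
  have q: "q > 0"
    using assms c_pos by simp
  have "continuous_on {c..q} (revenue q)"
    unfolding revenue_def[abs_def] using q
    by (intro continuous_intros continuous_on_compose2[OF F_cont]) auto
  then have "\<exists>p\<in>{c..q}. \<forall>p'\<in>{c..q}. revenue q p' \<le> revenue q p"
    using assms by (intro continuous_attains_sup[OF compact_Icc]) auto
  then obtain p where p: "\<And>p'. p' \<in> {c..q} \<Longrightarrow> revenue q p' \<le> revenue q p"
    by blast
  have "revenue q p' \<le> revenue q p" for p'
  proof (cases "p' \<in> {c<..<q}")
    case True
    then show ?thesis
      using p by simp
  next
    case False
    then have "revenue q p' \<le> revenue q c"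
      using revenue_nonpos[OF q] by (simp add: revenue_def)
    then show ?thesis
      using p[of c] assms by simp
  qed
  then show ?thesis
    by blast
qed

lemma revenue_maximizer_char:
  assumes "c < q" and max: "\<And>p'. revenue q p' \<le> revenue q p"
  shows "p / q \<in> {0<..<1}" and "psi (p / q) = c / q"
proof -
  have q: "q > 0"
    using assms c_pos by simp
  have "(c + q) / 2 / q < 1"
    using assms q by (simp add: field_simps)
  then have "revenue q ((c + q) / 2) > 0"
    unfolding revenue_def using F_less_1 assms by (intro mult_pos_pos) auto
  then have "p \<in> {c<..<q}"
    using max[of "(c + q) / 2"] revenue_nonpos[OF q, of p] by linarith
  then show v: "p / q \<in> {0<..<1}"
    using q c_pos by (auto simp: field_simps)
  have "((\<lambda>p. F (p / q)) has_real_derivative f (p / q) * (1 / q)) (at p)"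
    by (rule DERIV_chain2[where g = "\<lambda>p. p / q", OF F_deriv[OF v]]) (use q in \<open>auto intro!: derivative_eq_intros\<close>)
  then have "(revenue q has_real_derivative (1 - F (p / q)) - (p - c) * f (p / q) / q) (at p)"
    unfolding revenue_def[abs_def] by (auto intro!: derivative_eq_intros)
  then have "(1 - F (p / q)) - (p - c) * f (p / q) / q = 0"
    by (rule DERIV_local_max[of _ _ _ 1]) (use max in auto)
  then have "r (p / q) = p / q - c / q"
    using q f_pos[OF v] by (simp add: inv_hazard_def field_simps)
  then show "psi (p / q) = c / q"
    by (simp add: psi_eq)
qed

lemma pbar_char:
  assumes "c < q"
  shows "pbar q \<in> {0<..<1}" and "psi (pbar q) = c / q"
proof -
  have q: "q > 0"
    using assms c_pos by simp
  obtain p where max: "\<And>p'. revenue q p' \<le> revenue q p"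
    using revenue_maximizer_exists[OF assms] by blast
  have "opt_price F c q = p"
    unfolding opt_price_def
  proof (rule the_equality)
    show "\<forall>p'. (p' - c) * (1 - F (p' / q)) \<le> (p - c) * (1 - F (p / q))"
      using max by (simp add: revenue_def)
  next
    fix p2 assume "\<forall>p'. (p' - c) * (1 - F (p' / q)) \<le> (p2 - c) * (1 - F (p2 / q))"
    then have max2: "\<And>p'. revenue q p' \<le> revenue q p2"
      by (simp add: revenue_def)
    have "p2 / q = p / q"
    proof (rule psi_inj)
      show "p2 / q \<in> {0<..<1}" "p / q \<in> {0<..<1}"
        using revenue_maximizer_char(1) assms max max2 by blast+
      show "psi (p2 / q) = psi (p / q)" "psi (p2 / q) > 0"
        using revenue_maximizer_char(2) assms max max2 q c_pos by simp_all
    qed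
    then show "p2 = p"
      using q by simp
  qed
  then show "pbar q \<in> {0<..<1}" and "psi (pbar q) = c / q"
    using revenue_maximizer_char[OF assms max] by (simp_all add: opt_price_bar_def)
qed

lemma pbar_eqI:
  assumes "c < q" "v \<in> {0<..<1}" "psi v = c / q"
  shows "pbar q = v"
proof (rule psi_inj)
  show "pbar q \<in> {0<..<1}" "psi (pbar q) = psi v"
    using pbar_char[OF assms(1)] assms(3) by simp_all
  show "psi (pbar q) > 0"
    using pbar_char(2)[OF assms(1)] assms(1) c_pos by simp
qed (rule assms(2))

lemma pbar_antimono:
  assumes "c < q1" "q1 \<le> q2"
  shows "pbar q2 \<le> pbar q1"
proof (rule ccontr)
  assume "\<not> pbar q2 \<le> pbar q1"
  moreover have "c < q2"
    using assms by simp
  ultimately have "psi (pbar q1) < psi (pbar q2)"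
    using assms c_pos by (intro psi_less pbar_char) (simp_all add: pbar_char)
  then have "c / q1 < c / q2"
    using pbar_char(2)[of q1] pbar_char(2)[of q2] assms by simp
  moreover have "c / q2 \<le> c / q1"
    using assms c_pos by (intro divide_left_mono) auto
  ultimately show False
    by simp
qed

lemma psi_pos_left:
  assumes "x \<in> {0<..<1}" "psi x > 0"
  obtains a where "a \<in> {0<..<x}" "psi a > 0"
proof -
  have "psi \<midarrow>x\<rightarrow> psi x"
    using DERIV_isCont[OF psi_deriv[OF assms(1)]] unfolding isCont_def .
  then obtain d where "d > 0" and d: "\<And>z. z \<noteq> x \<and> \<bar>x - z\<bar> < d \<longrightarrow> 0 < psi z"
    using LIM_fun_gt_zero[OF _ assms(2)] by blast
  define m where "m = min d x"
  have m: "0 < m" "m \<le> d" "m \<le> x"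
    using \<open>d > 0\<close> assms(1) by (auto simp: m_def)
  show ?thesis
  proof (rule that)
    show "x - m / 2 \<in> {0<..<x}"
      using m by simp
    show "psi (x - m / 2) > 0"
      using d[of "x - m / 2"] m by simp
  qed
qed

lemma pbar_isCont:
  assumes q: "c < q"
  shows "isCont pbar q"
proof -
  define x where "x = pbar q"
  have x: "x \<in> {0<..<1}" "psi x = c / q"
    using pbar_char[OF q] by (auto simp: x_def)
  then have "psi x > 0"
    using q c_pos by simp
  then obtain a where a: "a \<in> {0<..<x}" "psi a > 0"
    using psi_pos_left x(1) by blast
  define b where "b = (x + 1) / 2"
  have z: "z \<in> {0<..<1}" "psi z > 0" if "a \<le> z" "z \<le> b" for z
  proof -
    show "z \<in> {0<..<1}"
      using that a x by (auto simp: b_def)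
    then show "psi z > 0"
      using psi_less[of a z] that a x by (cases "a = z") auto
  qed
  have "isCont pbar (c / psi x)"
  proof (rule isCont_inverse_function2[of a x b])
    fix z assume "a \<le> z" "z \<le> b"
    note z = z[OF this]
    have "c < c / psi z"
      using psi_less_1[OF z(1)] z(2) c_pos by (simp add: field_simps)
    then show "pbar (c / psi z) = z"
      using z c_pos by (intro pbar_eqI) auto
    show "isCont (\<lambda>z. c / psi z) z"
      using z DERIV_isCont[OF psi_deriv] by (auto intro!: continuous_intros)
  qed (use a x in \<open>auto simp: b_def\<close>)
  then show ?thesis
    using x q c_pos by simp
qed

lemma pbar_deriv:
  assumes q: "c < q"
  shows "(pbar has_real_derivative - c / (q\<^sup>2 * (1 - r' (pbar q)))) (at q)"
proof -
  define x where "x = pbar q"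
  have x: "x \<in> {0<..<1}" "psi x = c / q"
    using pbar_char[OF q] by (auto simp: x_def)
  have "psi x > 0"
    using x q c_pos by simp
  then have "1 - r' x > 0"
    using psi_deriv_pos[OF x(1)] by blast
  have "((\<lambda>z. c / psi z) has_real_derivative - c * (1 - r' x) / (psi x)\<^sup>2) (at (pbar q))"
    unfolding x_def[symmetric] using \<open>psi x > 0\<close>
    by (auto intro!: derivative_eq_intros psi_deriv x(1) simp: power2_eq_square)
  then have "(pbar has_real_derivative inverse (- c * (1 - r' x) / (psi x)\<^sup>2)) (at q)"
  proof (rule DERIV_inverse_function[where a = c and b = "q + 1"])
    show "- c * (1 - r' x) / (psi x)\<^sup>2 \<noteq> 0"
      using \<open>psi x > 0\<close> \<open>1 - r' x > 0\<close> c_pos by simp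
    fix y assume "c < y" "y < q + 1"
    then show "c / psi (pbar y) = y"
      using pbar_char[of y] c_pos by simp
  qed (use q pbar_isCont in auto)
  moreover have "inverse (- c * (1 - r' x) / (psi x)\<^sup>2) = - c / (q\<^sup>2 * (1 - r' x))"
    unfolding x(2) using c_pos q \<open>1 - r' x > 0\<close> by (simp add: field_simps power2_eq_square)
  ultimately show ?thesis
    by (simp add: x_def)
qed

definition upper_tail :: "real \<Rightarrow> real" where
  "upper_tail v = integral {v..1} surv"

lemma upper_tail_cont: "continuous_on {0..1} upper_tail"
  unfolding upper_tail_def[abs_def]
  by (intro indefinite_integral_continuous_1' integrable_continuous_interval surv_cont)

lemma upper_tail_deriv:
  assumes "v \<in> {0<..<1}"
  shows "(upper_tail has_real_derivative - surv v) (at v)"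
proof -
  have "(upper_tail has_real_derivative - surv v) (at v within {0..1})"
    unfolding upper_tail_def[abs_def] using assms by (intro integral_has_real_derivative' surv_cont) auto
  then show ?thesis
    using assms by (simp add: at_within_Icc_at)
qed

lemma integral_surplus_eq:
  assumes w: "w \<in> {0<..<1}"
  shows "integral {w..1} (\<lambda>v. (v * q - c) * f v) = (w * q - c) * surv w + q * upper_tail w"
proof -
  define Phi where "Phi v = (v * q - c) * (F v - 1) - q * upper_tail v" for v
  have "((\<lambda>v. (v * q - c) * f v) has_integral (Phi 1 - Phi w)) {w..1}"
  proof (rule fundamental_theorem_of_calculus_interior)
    show "w \<le> 1"
      using w by simp
    show "continuous_on {w..1} Phi"
      unfolding Phi_def[abs_def] using w
      by (intro continuous_intros continuous_on_subset[OF F_cont] continuous_on_subset[OF upper_tail_cont]) auto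
  next
    fix x assume "x \<in> {w<..<1}"
    then have x: "x \<in> {0<..<1}"
      using w by auto
    have "(Phi has_real_derivative q * (F x - 1) + (x * q - c) * f x + q * surv x) (at x)"
      unfolding Phi_def[abs_def] by (auto intro!: derivative_eq_intros F_deriv upper_tail_deriv x)
    then show "(Phi has_vector_derivative (x * q - c) * f x) (at x)"
      by (simp add: has_real_derivative_iff_has_vector_derivative surv_def algebra_simps)
  qed
  then show ?thesis
    using F_above[of 1] by (simp add: integral_unique Phi_def surv_def upper_tail_def algebra_simps)
qed

definition marginal_surplus :: "real \<Rightarrow> real" where
  "marginal_surplus v = v * surv v + upper_tail v + surv v * psi v / (1 - r' v)"

lemma total_surplus_deriv:
  assumes q: "c < q"
  shows "(total_surplus F f c has_real_derivative marginal_surplus (pbar q)) (at q)"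
proof -
  define w where "w = pbar q"
  have w: "w \<in> {0<..<1}" "psi w = c / q"
    using pbar_char[OF q] by (auto simp: w_def)
  have "q > 0"
    using q c_pos by simp
  have "1 - r' w > 0"
    using psi_deriv_pos[OF w(1)] w(2) \<open>q > 0\<close> c_pos by simp
  define w' where "w' = - c / (q\<^sup>2 * (1 - r' w))"
  have pbar': "(pbar has_real_derivative w') (at q)"
    using pbar_deriv[OF q] by (simp add: w'_def w_def)
  define TS where "TS q = (pbar q * q - c) * surv (pbar q) + q * upper_tail (pbar q)" for q
  have "(TS has_real_derivative
      (w' * q + w) * surv w - (w * q - c) * f w * w' + upper_tail w - q * surv w * w') (at q)"
    unfolding TS_def[abs_def] w_def
    using DERIV_chain2[OF surv_deriv[OF w(1), unfolded w_def] pbar']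
      DERIV_chain2[OF upper_tail_deriv[OF w(1), unfolded w_def] pbar']
    by (auto intro!: derivative_eq_intros pbar' simp: w_def algebra_simps)
  moreover have "(w' * q + w) * surv w - (w * q - c) * f w * w' + upper_tail w - q * surv w * w'
      = marginal_surplus w"
  proof -
    have "- (w * q - c) * f w * w' = surv w * (c / q) / (1 - r' w)"
      using surv_eq[OF w(1)] w(2) \<open>q > 0\<close> \<open>1 - r' w > 0\<close>
      by (simp add: psi_eq w'_def field_simps power2_eq_square)
    then show ?thesis
      unfolding marginal_surplus_def w(2) by (simp add: algebra_simps)
  qed
  moreover have "TS x = total_surplus F f c x" if "x \<in> {c<..}" for x
    using integral_surplus_eq[of "pbar x" x] pbar_char[of x] that
    by (simp add: TS_def total_surplus_def opt_price_bar_def)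
  ultimately show ?thesis
    using has_field_derivative_transform_within_open[of TS _ q "{c<..}"] q
    by (simp add: w_def)
qed

lemma marginal_surplus_deriv:
  assumes v: "v \<in> {0<..<1}" and "psi v > 0"
  shows "(marginal_surplus has_real_derivative
      - (f v * psi v / (1 - r' v)\<^sup>2) * (1 + (1 - r' v)\<^sup>2 - (r v * r'' v + r' v))) (at v)"
proof -
  have "1 - r' v > 0"
    using psi_deriv_pos[OF assms] .
  have "(marginal_surplus has_real_derivative
      surv v - v * f v - surv v + ((- f v * psi v + surv v * (1 - r' v)) * (1 - r' v) + surv v * psi v * r'' v)
        / ((1 - r' v) * (1 - r' v))) (at v)"
    unfolding marginal_surplus_def[abs_def] using \<open>1 - r' v > 0\<close>
    by (auto intro!: derivative_eq_intros surv_deriv upper_tail_deriv psi_deriv r'_deriv v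
        simp: power2_eq_square algebra_simps)
  moreover have "surv v - v * f v - surv v + ((- f v * psi v + surv v * (1 - r' v)) * (1 - r' v) + surv v * psi v * r'' v)
        / ((1 - r' v) * (1 - r' v))
      = - (f v * psi v / (1 - r' v)\<^sup>2) * (1 + (1 - r' v)\<^sup>2 - (r v * r'' v + r' v))"
  proof -
    define D where "D = 1 - r' v"
    have "D > 0" "r' v = 1 - D"
      using \<open>1 - r' v > 0\<close> by (simp_all add: D_def)
    then show ?thesis
      unfolding surv_eq[OF v] psi_eq \<open>r' v = 1 - D\<close> by (simp add: field_simps power2_eq_square)
  qed
  ultimately show ?thesis
    by simp
qed

lemma pbar_onto:
  assumes "c < q_l" "q_l \<le> q_h" "v \<in> {pbar q_h<..<pbar q_l}"
  shows "\<exists>q\<in>{q_l<..<q_h}. pbar q = v"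
proof -
  obtain q where q: "q_l \<le> q" "q \<le> q_h" "pbar q = v"
    using IVT2[of pbar q_h v q_l] assms pbar_isCont by force
  moreover have "q \<noteq> q_l" "q \<noteq> q_h"
    using assms(3) q(3) by auto
  ultimately show ?thesis
    by auto
qed

lemma psi_pos_between_cutoffs:
  assumes "c < q_l" "c < q_h" "v \<in> {pbar q_h..pbar q_l}"
  shows "v \<in> {0<..<1}" and "psi v > 0"
proof -
  have h: "pbar q_h \<in> {0<..<1}" "psi (pbar q_h) = c / q_h"
    using pbar_char[OF assms(2)] by simp_all
  show v: "v \<in> {0<..<1}"
    using h(1) pbar_char(1)[OF assms(1)] assms(3) by auto
  have "psi (pbar q_h) > 0"
    using h(2) assms(2) c_pos by simp
  show "psi v > 0"
  proof (cases "v = pbar q_h")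
    case True
    then show ?thesis
      using \<open>psi (pbar q_h) > 0\<close> by simp
  next
    case False
    then have "pbar q_h < v"
      using assms(3) by simp
    then have "psi (pbar q_h) < psi v"
      using psi_less h(1) v \<open>psi (pbar q_h) > 0\<close> by blast
    then show ?thesis
      using \<open>psi (pbar q_h) > 0\<close> by simp
  qed
qed

theorem convex_total_surplus_iff:
  assumes "c < q_l" "q_l < q_h"
  shows "convex_on {q_l..q_h} (total_surplus F f c) \<longleftrightarrow>
    (\<forall>v \<in> {pbar q_h <..< pbar q_l}. r v * r'' v + r' v \<le> 1 + (1 - r' v)\<^sup>2)"
proof -
  define marginal_surplus' where
    "marginal_surplus' v = - (f v * psi v / (1 - r' v)\<^sup>2) * (1 + (1 - r' v)\<^sup>2 - (r v * r'' v + r' v))" for v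
  have "c < q_h"
    using assms by simp
  note inner = psi_pos_between_cutoffs[OF \<open>c < q_l\<close> this]
  have "convex_on {q_l..q_h} (total_surplus F f c) \<longleftrightarrow> (\<forall>v \<in> {pbar q_h <..< pbar q_l}. marginal_surplus' v \<le> 0)"
  proof (rule convex_on_Icc_iff_deriv_comp_antitone)
    show "pbar y \<le> pbar x" if "x \<in> {q_l..q_h}" "y \<in> {q_l..q_h}" "x \<le> y" for x y
      using pbar_antimono that assms by auto
    show "\<exists>x\<in>{q_l<..<q_h}. pbar x = v" if "v \<in> {pbar q_h<..<pbar q_l}" for v
      using pbar_onto that assms by auto
    show "(total_surplus F f c has_real_derivative marginal_surplus (pbar x)) (at x)"
      if "x \<in> {q_l..q_h}" for x
      using total_surplus_deriv that assms by auto
    show "(marginal_surplus has_real_derivative marginal_surplus' v) (at v)" if "v \<in> {pbar q_h..pbar q_l}" for v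
      unfolding marginal_surplus'_def using marginal_surplus_deriv inner[OF that] by blast
  qed
  also have "\<dots> \<longleftrightarrow> (\<forall>v \<in> {pbar q_h <..< pbar q_l}. r v * r'' v + r' v \<le> 1 + (1 - r' v)\<^sup>2)"
  proof (intro ball_cong refl)
    fix v assume "v \<in> {pbar q_h<..<pbar q_l}"
    then have "v \<in> {pbar q_h..pbar q_l}"
      by simp
    then have "v \<in> {0<..<1}" "psi v > 0"
      using inner by blast+
    define P where "P = f v * psi v / (1 - r' v)\<^sup>2"
    have "P > 0"
      using f_pos[of v] psi_deriv_pos[of v] \<open>v \<in> {0<..<1}\<close> \<open>psi v > 0\<close> by (simp add: P_def)
    then have "marginal_surplus' v \<le> 0 \<longleftrightarrow> 0 \<le> 1 + (1 - r' v)\<^sup>2 - (r v * r'' v + r' v)"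
      unfolding marginal_surplus'_def P_def[symmetric] by (simp add: zero_le_mult_iff)
    then show "marginal_surplus' v \<le> 0 \<longleftrightarrow> r v * r'' v + r' v \<le> 1 + (1 - r' v)\<^sup>2"
      by linarith
  qed
  finally show ?thesis .
qed

end

theorem lemma12:
  fixes F f :: "real \<Rightarrow> real" and q_l q_h c :: real
  assumes "0 < q_l" and "q_l < q_h" and "0 < c" and "c < q_l"
    and F_cont: "continuous_on UNIV F"
    and F_low: "\<And>v. v \<le> 0 \<Longrightarrow> F v = 0"
    and F_high: "\<And>v. 1 \<le> v \<Longrightarrow> F v = 1"
    and F_dens: "\<And>v. v \<in> {0<..<1} \<Longrightarrow> (F has_real_derivative f v) (at v)"
    and f_pos: "\<And>v. v \<in> {0<..<1} \<Longrightarrow> f v > 0"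
    and f_C2: "\<exists>f1 f2. (\<forall>v\<in>{0<..<1}. (f has_real_derivative f1 v) (at v)
                                   \<and> (f1 has_real_derivative f2 v) (at v))
                     \<and> continuous_on {0<..<1} f2"
    and psi_mono: "\<And>v. v \<in> {0<..<1} \<Longrightarrow> virt_val F f v > 0 \<Longrightarrow> deriv (virt_val F f) v > 0"
  shows "convex_on {q_l..q_h} (total_surplus F f c) \<longleftrightarrow>
    (\<forall>v \<in> {opt_price_bar F c q_h <..< opt_price_bar F c q_l}.
       inv_hazard F f v * deriv (deriv (inv_hazard F f)) v + deriv (inv_hazard F f) v
         \<le> 1 + (1 - deriv (inv_hazard F f) v)^2)"
proof -
  obtain f' f'' where "\<forall>v\<in>{0<..<1}. (f has_real_derivative f' v) (at v) \<and> (f' has_real_derivative f'' v) (at v)"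
    using f_C2 by blast
  then interpret pricing_model F f f' f'' c
    using assms by unfold_locales auto
  show ?thesis
    using convex_total_surplus_iff assms by simp
qed

end
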